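(* For every $N\ge1$ and every pair of disjoint nonempty subsets $\mathscr A,\mathscr B$ of $E_N$, $$\mathrm{Cap}^s_N(\mathscr A,\mathscr B)\le\mathrm{Cap}_N(\mathscr A,\mathscr B)\le 4L^2\,\mathrm{Cap}^s_N(\mathscr A,\mathscr B).$$
   Context: Fix an integer $L\ge2$, $\mathbb T_L=\mathbb Z/L\mathbb Z$, $\alpha>0$, $a(0)=1$, $a(n)=n^\alpha$ ($n\ge1$), $g(0)=0$, $g(n)=a(n)/a(n-1)$ ($n\ge1$). $E_N=\{\eta\in\{0,1,\dots\}^{\mathbb T_L}:\sum_x\eta_x=N\}$; $\sigma^{x,y}\eta$ moves one particle from $x$ to $y$. Generator $(\mathcal LF)(\eta)=\sum_xg(\eta_x)[F(\sigma^{x,x+1}\eta)-F(\eta)]$; invariant measure $\mu_N(\eta)=W_N^{-1}\prod_xa(\eta_x)^{-1}$, $W_N=\sum_{\zeta\in E_N}\prod_xa(\zeta_x)^{-1}$. Dirichlet form $D_N(F)=\frac12\sum_x\sum_{\eta\in E_N}\mu_N(\eta)g(\eta_x)[F(\sigma^{x,x+1}\eta)-F(\eta)]^2$. For disjoint nonempty $\mathscr A,\mathscr B\subset E_N$: $V_{\mathscr A,\mathscr B}$ is the function equal to $1$ on $\mathscr A$, $0$ on $\mathscr B$, and $V(\eta)=\mathbf P_\eta[H_{\mathscr A}<H_{\mathscr B}]$ elsewhere (the unique function with these boundary values with $\mathcal LV=0$ off $\mathscr A\cup\mathscr B$); $\mathrm{Cap}_N(\mathscr A,\mathscr B)=D_N(V_{\mathscr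 A,\mathscr B})$. The symmetric capacity is $\mathrm{Cap}^s_N(\mathscr A,\mathscr B)=\inf\{D_N(F):F|_{\mathscr A}=1,\ F|_{\mathscr B}=0\}$ (capacity of the reversible process with generator $(\mathcal L+\mathcal L^* )/2$, $\mathcal L^*$ the $L^2(\mu_N)$-adjoint of $\mathcal L$). *)

theory Defs
  imports Complex_Main
begin

text \<open>Sites of the torus T_L are 0..<L; configurations are eta :: nat => nat
  vanishing outside {0..<L}.\<close>

definition zrp_a :: "real \<Rightarrow> nat \<Rightarrow> real" where
  "zrp_a \<alpha> n = (if n = 0 then 1 else real n powr \<alpha>)"

definition zrp_g :: "real \<Rightarrow> nat \<Rightarrow> real" where
  "zrp_g \<alpha> n = (if n = 0 then 0 else zrp_a \<alpha> n / zrp_a \<alpha> (n - 1))"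

definition config_space :: "nat \<Rightarrow> nat \<Rightarrow> (nat \<Rightarrow> nat) set" where
  "config_space L N = {\<eta>. (\<forall>x. x \<ge> L \<longrightarrow> \<eta> x = 0) \<and> (\<Sum>x<L. \<eta> x) = N}"

text \<open>move one particle from x to y (only used when eta x >= 1)\<close>
definition sigma :: "nat \<Rightarrow> nat \<Rightarrow> (nat \<Rightarrow> nat) \<Rightarrow> (nat \<Rightarrow> nat)" where
  "sigma x y \<eta> = (\<eta>(x := \<eta> x - 1))(y := (\<eta>(x := \<eta> x - 1)) y + 1)"

definition next_site :: "nat \<Rightarrow> nat \<Rightarrow> nat" where
  "next_site L x = (x + 1) mod L"

definition weight :: "nat \<Rightarrow> real \<Rightarrow> (nat \<Rightarrow> nat) \<Rightarrow> real" where
  "weight L \<alpha> \<eta> = (\<Prod>x<L. 1 / zrp_a \<alpha> (\<eta> x))"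

definition partition_fn :: "nat \<Rightarrow> real \<Rightarrow> nat \<Rightarrow> real" where
  "partition_fn L \<alpha> N = (\<Sum>\<zeta>\<in>config_space L N. weight L \<alpha> \<zeta>)"

definition mu :: "nat \<Rightarrow> real \<Rightarrow> nat \<Rightarrow> (nat \<Rightarrow> nat) \<Rightarrow> real" where
  "mu L \<alpha> N \<eta> = weight L \<alpha> \<eta> / partition_fn L \<alpha> N"

definition generator :: "nat \<Rightarrow> real \<Rightarrow> ((nat \<Rightarrow> nat) \<Rightarrow> real) \<Rightarrow> (nat \<Rightarrow> nat) \<Rightarrow> real" where
  "generator L \<alpha> F \<eta> =
     (\<Sum>x<L. zrp_g \<alpha> (\<eta> x) * (F (sigma x (next_site L x) \<eta>) - F \<eta>))"

definition dirichlet :: "nat \<Rightarrow> real \<Rightarrow> nat \<Rightarrow> ((nat \<Rightarrow> nat) \<Rightarrow> real) \<Rightarrow> real" where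
  "dirichlet L \<alpha> N F = (1/2) * (\<Sum>x<L. \<Sum>\<eta>\<in>config_space L N.
      mu L \<alpha> N \<eta> * zrp_g \<alpha> (\<eta> x) * (F (sigma x (next_site L x) \<eta>) - F \<eta>)^2)"

definition eq_potential :: "nat \<Rightarrow> real \<Rightarrow> nat \<Rightarrow> (nat \<Rightarrow> nat) set \<Rightarrow> (nat \<Rightarrow> nat) set
    \<Rightarrow> ((nat \<Rightarrow> nat) \<Rightarrow> real)" where
  "eq_potential L \<alpha> N A B = (THE F.
      (\<forall>\<eta>. \<eta> \<notin> config_space L N \<longrightarrow> F \<eta> = 0) \<and>
      (\<forall>\<eta>\<in>A. F \<eta> = 1) \<and> (\<forall>\<eta>\<in>B. F \<eta> = 0) \<and>
      (\<forall>\<eta>\<in>config_space L N - (A \<union> B). generator L \<alpha> F \<eta> = 0))"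

definition capacity :: "nat \<Rightarrow> real \<Rightarrow> nat \<Rightarrow> (nat \<Rightarrow> nat) set \<Rightarrow> (nat \<Rightarrow> nat) set \<Rightarrow> real" where
  "capacity L \<alpha> N A B = dirichlet L \<alpha> N (eq_potential L \<alpha> N A B)"

definition sym_capacity :: "nat \<Rightarrow> real \<Rightarrow> nat \<Rightarrow> (nat \<Rightarrow> nat) set \<Rightarrow> (nat \<Rightarrow> nat) set \<Rightarrow> real" where
  "sym_capacity L \<alpha> N A B = Inf {dirichlet L \<alpha> N F | F.
      (\<forall>\<eta>\<in>A. F \<eta> = 1) \<and> (\<forall>\<eta>\<in>B. F \<eta> = 0)}"

end

theory Submission
  imports Defs "HOL-Analysis.Convex"
begin

text \<open>
  The lower bound \<open>Cap^s \<le> Cap\<close> holds because the equilibrium potential \<open>V = V_{A,B}\<close>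
  is an admissible test function in the variational definition of \<open>Cap^s\<close>; what has
  to be proved is that \<open>V\<close> is well defined: uniqueness by a maximum principle
  (using irreducibility of the dynamics on \<open>E_N\<close>), existence by a monotone Jacobi
  iteration.

  For the upper bound, \<open>D(G) = -\<langle>\<L>G, G\<rangle>_\<mu>\<close>, and \<open>\<langle>\<L>V, F\<rangle>_\<mu>\<close> is the same for every
  test function \<open>F\<close> with the boundary values of \<open>V\<close>, since \<open>\<L>V = 0\<close> off \<open>A \<union> B\<close>.
  The sector inequality \<open>|\<langle>\<L>G, F\<rangle>_\<mu>| \<le> D(G)/2 + 2 L^2 D(F)\<close> then gives
  \<open>D(V) \<le> 4 L^2 D(F)\<close>.  It is proved in an edge representation: an edge is a
  possible jump, stationarity of \<open>\<mu>_N\<close> says that letting the same particle jump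
  again preserves the conductances, and the orbit of an edge under this shift is a
  cycle of length \<open>L\<close>, on which an elementary Cauchy--Schwarz estimate applies.
\<close>

lemma sigma_occupation:
  assumes "\<eta> x \<ge> 1"
  shows "sigma x y \<eta> z + (if z = x then 1 else 0) = \<eta> z + (if z = y then 1 else 0)"
  using assms by (auto simp: sigma_def)

lemma sigma_sigma:
  assumes "\<eta> x \<ge> 1"
  shows "sigma y z (sigma x y \<eta>) = sigma x z \<eta>"
  using assms by (auto simp: sigma_def fun_eq_iff)

lemma sigma_same_site:
  assumes "\<eta> x \<ge> 1"
  shows "sigma x x \<eta> = \<eta>"
  using assms by (auto simp: sigma_def fun_eq_iff)

lemma sigma_target_occupied: "\<eta> x \<ge> 1 \<Longrightarrow> sigma x y \<eta> y \<ge> 1"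
  by (auto simp: sigma_def)

lemma sigma_in_config_space:
  assumes "\<eta> \<in> config_space L N" "x < L" "y < L" "\<eta> x \<ge> 1"
  shows "sigma x y \<eta> \<in> config_space L N"
proof -
  have "(\<Sum>z<L. sigma x y \<eta> z + (if z = x then 1 else 0)) = (\<Sum>z<L. \<eta> z + (if z = y then 1 else 0))"
    using sigma_occupation[of \<eta> x y, OF assms(4)] by simp
  hence "(\<Sum>z<L. sigma x y \<eta> z) + 1 = (\<Sum>z<L. \<eta> z) + 1"
    using assms(2,3) by (simp add: sum.distrib)
  moreover have "\<forall>z. z \<ge> L \<longrightarrow> sigma x y \<eta> z = 0"
    using assms unfolding config_space_def sigma_def by auto
  ultimately show ?thesis using assms(1) unfolding config_space_def by auto
qed

lemma next_site_less: "L > 0 \<Longrightarrow> next_site L x < L"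
  by (simp add: next_site_def)

lemma next_site_mod: "next_site L (a mod L) = Suc a mod L"
  by (simp add: next_site_def mod_Suc_eq)

lemma next_site_neq:
  assumes "L \<ge> 2" "x < L"
  shows "next_site L x \<noteq> x"
proof (cases "Suc x < L")
  case False
  hence "Suc x = L" using assms(2) by simp
  hence "next_site L x = 0" "x \<noteq> 0" using assms(1) by (auto simp: next_site_def)
  thus ?thesis by simp
qed (simp add: next_site_def)

lemma finite_config_space: "finite (config_space L N)"
proof -
  let ?F = "{f. \<forall>x. (x \<in> {..<L} \<longrightarrow> f x \<in> {..N}) \<and> (x \<notin> {..<L} \<longrightarrow> f x = 0)}"
  have "\<eta> x \<le> N" if "\<eta> \<in> config_space L N" "x < L" for \<eta> x
  proof -
    have "\<eta> x \<le> (\<Sum>z<L. \<eta> z)" using that(2) by (intro member_le_sum) auto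
    thus ?thesis using that(1) by (simp add: config_space_def)
  qed
  hence "config_space L N \<subseteq> ?F" by (auto simp: config_space_def)
  thus ?thesis by (rule finite_subset) (intro finite_set_of_finite_funs, auto)
qed

lemma zrp_a_pos: "zrp_a \<alpha> n > 0"
  by (auto simp: zrp_a_def)

lemma zrp_g_nonneg: "zrp_g \<alpha> n \<ge> 0"
  using zrp_a_pos[of \<alpha> n] zrp_a_pos[of \<alpha> "n - 1"] by (auto simp: zrp_g_def)

lemma zrp_g_pos: "n \<ge> 1 \<Longrightarrow> zrp_g \<alpha> n > 0"
  using zrp_a_pos[of \<alpha> n] zrp_a_pos[of \<alpha> "n - 1"] by (auto simp: zrp_g_def)

section \<open>Irreducibility of the dynamics on \<open>E_N\<close>\<close>

definition jumps :: "nat \<Rightarrow> nat \<Rightarrow> ((nat \<Rightarrow> nat) \<times> (nat \<Rightarrow> nat)) set" where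
  "jumps L N = {(\<eta>, sigma x (next_site L x) \<eta>) | \<eta> x. \<eta> \<in> config_space L N \<and> x < L \<and> \<eta> x \<ge> 1}"

lemma jumps_carry_particle:
  assumes "\<eta> \<in> config_space L N" "x < L" "\<eta> x \<ge> 1"
  shows "(sigma x ((x + 1) mod L) \<eta>, sigma x ((x + Suc k) mod L) \<eta>) \<in> (jumps L N)\<^sup>*"
proof (induction k)
  case (Suc k)
  define y where "y = (x + Suc k) mod L"
  have yL: "y < L" using assms(2) by (simp add: y_def)
  let ?\<xi> = "sigma x y \<eta>"
  have "(?\<xi>, sigma y (next_site L y) ?\<xi>) \<in> jumps L N"
    unfolding jumps_def using sigma_in_config_space[OF assms(1,2) yL assms(3)] yL
      sigma_target_occupied[of \<eta> x, OF assms(3)] by blast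
  moreover have "sigma y (next_site L y) ?\<xi> = sigma x ((x + Suc (Suc k)) mod L) \<eta>"
    using sigma_sigma[of \<eta> x, OF assms(3)] by (simp add: y_def next_site_mod)
  ultimately show ?case using Suc.IH by (simp add: y_def)
qed simp

text \<open>A jump is undone by carrying the same particle once around the torus.\<close>
lemma jump_reversible:
  assumes "(\<eta>, \<zeta>) \<in> jumps L N"
  shows "(\<zeta>, \<eta>) \<in> (jumps L N)\<^sup>*"
proof -
  obtain x where h: "\<eta> \<in> config_space L N" "x < L" "1 \<le> \<eta> x" "\<zeta> = sigma x (next_site L x) \<eta>"
    using assms unfolding jumps_def by blast
  have "(x + Suc (L - 1)) mod L = x" using h(2) by simp
  thus ?thesis using jumps_carry_particle[OF h(1-3), of "L - 1"] h sigma_same_site[of \<eta> x, OF h(3)]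
    by (simp add: next_site_def)
qed

lemma jumps_rtrancl_sym:
  assumes "(\<eta>, \<zeta>) \<in> (jumps L N)\<^sup>*"
  shows "(\<zeta>, \<eta>) \<in> (jumps L N)\<^sup>*"
  using assms
proof (induction rule: rtrancl_induct)
  case (step y z)
  thus ?case using jump_reversible[OF step(2)] by (meson rtrancl_trans)
qed simp

definition packed_config :: "nat \<Rightarrow> nat \<Rightarrow> nat \<Rightarrow> nat" where
  "packed_config L N = (\<lambda>i. if i = L - 1 then N else 0)"

text \<open>Total distance the particles still have to travel to reach site \<open>L - 1\<close>;
  it strictly decreases along every jump \<open>z \<rightarrow> z + 1\<close> with \<open>z < L - 1\<close>.\<close>
definition distance_to_packed :: "nat \<Rightarrow> (nat \<Rightarrow> nat) \<Rightarrow> nat" where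
  "distance_to_packed L \<eta> = (\<Sum>w<L. \<eta> w * (L - 1 - w))"

lemma sum_add_indicator_weighted:
  fixes f c :: "nat \<Rightarrow> nat"
  assumes "z < L"
  shows "(\<Sum>w<L. (f w + (if w = z then 1 else 0)) * c w) = (\<Sum>w<L. f w * c w) + c z"
proof -
  have "(\<Sum>w<L. (f w + (if w = z then 1 else 0)) * c w)
      = (\<Sum>w<L. f w * c w) + (\<Sum>w<L. if w = z then c w else 0)"
    by (subst sum.distrib[symmetric], rule sum.cong) auto
  thus ?thesis using assms by simp
qed

lemma distance_to_packed_decreases:
  assumes "\<eta> z \<ge> 1" "z < L - 1"
  shows "distance_to_packed L (sigma z (Suc z) \<eta>) < distance_to_packed L \<eta>"
proof -
  have "(\<Sum>w<L. (sigma z (Suc z) \<eta> w + (if w = z then 1 else 0)) * (L - 1 - w))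
      = (\<Sum>w<L. (\<eta> w + (if w = Suc z then 1 else 0)) * (L - 1 - w))"
    using sigma_occupation[of \<eta> z "Suc z", OF assms(1)] by simp
  hence "distance_to_packed L (sigma z (Suc z) \<eta>) + (L - 1 - z)
       = distance_to_packed L \<eta> + (L - 1 - Suc z)"
    using assms(2) unfolding distance_to_packed_def by (simp add: sum_add_indicator_weighted)
  thus ?thesis using assms(2) by linarith
qed

lemma packed_config_unique:
  assumes "\<eta> \<in> config_space L N" "L \<ge> 1" "\<forall>z < L - 1. \<eta> z = 0"
  shows "\<eta> = packed_config L N"
proof
  fix w
  have outside: "\<eta> z = 0" if "z \<noteq> L - 1" for z
    using assms that by (cases "z < L") (auto simp: config_space_def)
  have "N = (\<Sum>z<L. \<eta> z)" using assms(1) by (simp add: config_space_def)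
  also have "\<dots> = (\<Sum>z<L. if z = L - 1 then \<eta> z else 0)"
    using outside by (intro sum.cong) auto
  also have "\<dots> = \<eta> (L - 1)" using assms(2) by simp
  finally show "\<eta> w = packed_config L N w"
    using outside by (simp add: packed_config_def)
qed

lemma reach_packed_config:
  assumes "\<eta> \<in> config_space L N" "L \<ge> 1"
  shows "(\<eta>, packed_config L N) \<in> (jumps L N)\<^sup>*"
  using assms(1)
proof (induction "distance_to_packed L \<eta>" arbitrary: \<eta> rule: less_induct)
  case less
  show ?case
  proof (cases "\<exists>z < L - 1. \<eta> z \<ge> 1")
    case True
    then obtain z where z: "z < L - 1" "\<eta> z \<ge> 1" by blast
    have "next_site L z = Suc z" using z(1) by (simp add: next_site_def)
    hence "(\<eta>, sigma z (Suc z) \<eta>) \<in> jumps L N"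
      unfolding jumps_def using less.prems z by force
    moreover have "(sigma z (Suc z) \<eta>, packed_config L N) \<in> (jumps L N)\<^sup>*"
      using less.hyps[OF distance_to_packed_decreases[of \<eta> z L, OF z(2,1)]]
        sigma_in_config_space[OF less.prems] z by simp
    ultimately show ?thesis by (meson converse_rtrancl_into_rtrancl)
  next
    case False
    hence "\<eta> = packed_config L N"
      using packed_config_unique[OF less.prems assms(2)] by (simp add: not_le)
    thus ?thesis by simp
  qed
qed

lemma config_space_irreducible:
  assumes "\<eta> \<in> config_space L N" "\<zeta> \<in> config_space L N" "L \<ge> 1"
  shows "(\<eta>, \<zeta>) \<in> (jumps L N)\<^sup>*"
  using reach_packed_config[OF assms(1,3)] jumps_rtrancl_sym[OF reach_packed_config[OF assms(2,3)]]
  by (meson rtrancl_trans)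

section \<open>The equilibrium potential\<close>

definition is_eq_potential ::
    "nat \<Rightarrow> real \<Rightarrow> nat \<Rightarrow> (nat \<Rightarrow> nat) set \<Rightarrow> (nat \<Rightarrow> nat) set \<Rightarrow> ((nat \<Rightarrow> nat) \<Rightarrow> real) \<Rightarrow> bool"
  where
  "is_eq_potential L \<alpha> N A B F \<longleftrightarrow>
      (\<forall>\<eta>. \<eta> \<notin> config_space L N \<longrightarrow> F \<eta> = 0) \<and>
      (\<forall>\<eta>\<in>A. F \<eta> = 1) \<and> (\<forall>\<eta>\<in>B. F \<eta> = 0) \<and>
      (\<forall>\<eta>\<in>config_space L N - (A \<union> B). generator L \<alpha> F \<eta> = 0)"

lemma generator_diff:
  "generator L \<alpha> (\<lambda>\<zeta>. F \<zeta> - G \<zeta>) \<eta> = generator L \<alpha> F \<eta> - generator L \<alpha> G \<eta>"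
  unfolding generator_def by (simp add: sum_subtractf[symmetric] algebra_simps)

lemma harmonic_max_spreads:
  assumes y: "y \<in> config_space L N" and harm: "generator L \<alpha> D y = 0"
    and max: "\<forall>\<zeta>\<in>config_space L N. D \<zeta> \<le> D y"
    and x: "x < L" "y x \<ge> 1"
  shows "D (sigma x (next_site L x) y) = D y"
proof -
  define t where "t x' = zrp_g \<alpha> (y x') * (D (sigma x' (next_site L x') y) - D y)" for x'
  have t_nonpos: "t x' \<le> 0" if "x' < L" for x'
  proof (cases "y x' \<ge> 1")
    case True
    have "sigma x' (next_site L x') y \<in> config_space L N"
      using sigma_in_config_space[OF y that next_site_less True] x(1) by simp
    thus ?thesis using max zrp_g_nonneg[of \<alpha> "y x'"] by (simp add: t_def mult_nonneg_nonpos)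
  qed (simp add: t_def zrp_g_def)
  have "(\<Sum>x'<L. - t x') = 0" using harm by (simp add: generator_def t_def sum_negf)
  hence "- t x = 0" using t_nonpos x(1) by (subst (asm) sum_nonneg_eq_0_iff) auto
  thus ?thesis using zrp_g_pos[OF x(2), of \<alpha>] by (simp add: t_def)
qed

text \<open>A positive maximum would, by irreducibility,
  propagate to a point of \<open>A\<close>.\<close>
lemma harmonic_max_principle:
  assumes L: "L \<ge> 1" and AE: "A \<subseteq> config_space L N" and Ane: "A \<noteq> {}"
    and bdry: "\<forall>\<eta>\<in>A \<union> B. D \<eta> \<le> 0"
    and harm: "\<forall>\<eta>\<in>config_space L N - (A \<union> B). generator L \<alpha> D \<eta> = 0"
    and \<eta>: "\<eta> \<in> config_space L N"
  shows "D \<eta> \<le> 0"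
proof (rule ccontr)
  assume pos: "\<not> D \<eta> \<le> 0"
  let ?E = "config_space L N"
  let ?M = "Max (D ` ?E)"
  have fin: "finite (D ` ?E)" using finite_config_space by simp
  have le_max: "\<forall>\<zeta>\<in>?E. D \<zeta> \<le> ?M" using fin by simp
  obtain \<eta>0 where \<eta>0: "\<eta>0 \<in> ?E" "D \<eta>0 = ?M"
    using Max_in[OF fin] \<eta> by fastforce
  have M_pos: "?M > 0" using le_max \<eta> pos by force
  have reach: "D \<zeta> = ?M" if "(\<eta>0, \<zeta>) \<in> (jumps L N)\<^sup>*" for \<zeta>
    using that
  proof (induction rule: rtrancl_induct)
    case (step y z)
    obtain x where h: "y \<in> ?E" "x < L" "1 \<le> y x" "z = sigma x (next_site L x) y"
      using step(2) unfolding jumps_def by blast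
    have "y \<notin> A \<union> B" using bdry step(3) M_pos by force
    hence "generator L \<alpha> D y = 0" using harm h(1) by blast
    thus ?case
      using harmonic_max_spreads[where D = D and \<alpha> = \<alpha>, OF h(1) _ _ h(2,3)] le_max step(3) h(4)
      by simp
  qed (simp add: \<eta>0)
  obtain a where a: "a \<in> A" using Ane by blast
  hence "D a = ?M" using reach config_space_irreducible[OF \<eta>0(1) _ L] AE by blast
  thus False using bdry a M_pos by force
qed

lemma eq_potential_unique:
  assumes L: "L \<ge> 1" and AE: "A \<subseteq> config_space L N" and Ane: "A \<noteq> {}"
    and F: "is_eq_potential L \<alpha> N A B F" and G: "is_eq_potential L \<alpha> N A B G"
  shows "F = G"
proof
  fix \<eta>
  have le: "F' \<eta> \<le> G' \<eta>"
    if F': "is_eq_potential L \<alpha> N A B F'" and G': "is_eq_potential L \<alpha> N A B G'" for F' G'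
  proof (cases "\<eta> \<in> config_space L N")
    case True
    have "\<forall>\<zeta>\<in>A \<union> B. F' \<zeta> - G' \<zeta> \<le> 0"
      using F' G' by (auto simp: is_eq_potential_def)
    moreover have "\<forall>\<zeta>\<in>config_space L N - (A \<union> B). generator L \<alpha> (\<lambda>\<zeta>. F' \<zeta> - G' \<zeta>) \<zeta> = 0"
      using F' G' by (simp add: is_eq_potential_def generator_diff)
    ultimately have "F' \<eta> - G' \<eta> \<le> 0"
      using harmonic_max_principle[OF L AE Ane _ _ True, where D = "\<lambda>\<zeta>. F' \<zeta> - G' \<zeta>"
          and B = B and \<alpha> = \<alpha>] by simp
    thus ?thesis by simp
  qed (use F' G' in \<open>simp add: is_eq_potential_def\<close>)
  show "F \<eta> = G \<eta>" using le[OF F G] le[OF G F] by simp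
qed

definition total_rate :: "nat \<Rightarrow> real \<Rightarrow> (nat \<Rightarrow> nat) \<Rightarrow> real" where
  "total_rate L \<alpha> \<eta> = (\<Sum>x<L. zrp_g \<alpha> (\<eta> x))"

lemma total_rate_nonneg: "total_rate L \<alpha> \<eta> \<ge> 0"
  unfolding total_rate_def by (intro sum_nonneg) (simp add: zrp_g_nonneg)

lemma total_rate_pos:
  assumes "\<eta> \<in> config_space L N" "N \<ge> 1"
  shows "total_rate L \<alpha> \<eta> > 0"
proof -
  obtain x where x: "x < L" "\<eta> x \<ge> 1"
  proof (rule ccontr)
    assume "\<not> thesis"
    hence "\<forall>x\<in>{..<L}. \<eta> x = 0" using that by force
    thus False using assms by (simp add: config_space_def)
  qed
  have "zrp_g \<alpha> (\<eta> x) \<le> total_rate L \<alpha> \<eta>"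
    unfolding total_rate_def using x by (intro member_le_sum) (auto simp: zrp_g_nonneg)
  thus ?thesis using zrp_g_pos[OF x(2), of \<alpha>] by simp
qed

text \<open>One step of the Jacobi iteration for the Dirichlet problem: boundary values
  on \<open>A \<union> B\<close>, zero outside \<open>E_N\<close>, and the average over the jumps elsewhere.\<close>
definition harmonic_update ::
    "nat \<Rightarrow> real \<Rightarrow> nat \<Rightarrow> (nat \<Rightarrow> nat) set \<Rightarrow> (nat \<Rightarrow> nat) set
      \<Rightarrow> ((nat \<Rightarrow> nat) \<Rightarrow> real) \<Rightarrow> (nat \<Rightarrow> nat) \<Rightarrow> real" where
  "harmonic_update L \<alpha> N A B F \<eta> =
     (if \<eta> \<notin> config_space L N then 0 else if \<eta> \<in> A then 1 else if \<eta> \<in> B then 0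
      else (\<Sum>x<L. zrp_g \<alpha> (\<eta> x) * F (sigma x (next_site L x) \<eta>)) / total_rate L \<alpha> \<eta>)"

lemma harmonic_update_mono:
  assumes "\<And>\<zeta>. F \<zeta> \<le> G \<zeta>"
  shows "harmonic_update L \<alpha> N A B F \<eta> \<le> harmonic_update L \<alpha> N A B G \<eta>"
proof -
  have "(\<Sum>x<L. zrp_g \<alpha> (\<eta> x) * F (sigma x (next_site L x) \<eta>))
      \<le> (\<Sum>x<L. zrp_g \<alpha> (\<eta> x) * G (sigma x (next_site L x) \<eta>))"
    by (intro sum_mono mult_left_mono assms zrp_g_nonneg)
  thus ?thesis unfolding harmonic_update_def using total_rate_nonneg[of L \<alpha> \<eta>]
    by (simp add: divide_right_mono)
qed

lemma harmonic_update_le_1: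
  assumes "\<And>\<zeta>. F \<zeta> \<le> 1"
  shows "harmonic_update L \<alpha> N A B F \<eta> \<le> 1"
proof -
  have "(\<Sum>x<L. zrp_g \<alpha> (\<eta> x) * F (sigma x (next_site L x) \<eta>)) \<le> (\<Sum>x<L. zrp_g \<alpha> (\<eta> x) * 1)"
    by (intro sum_mono mult_left_mono assms zrp_g_nonneg)
  thus ?thesis unfolding harmonic_update_def total_rate_def
    using total_rate_nonneg[of L \<alpha> \<eta>] by (auto simp: divide_le_eq_1 total_rate_def)
qed

lemma harmonic_update_nonneg:
  assumes "\<And>\<zeta>. F \<zeta> \<ge> 0"
  shows "harmonic_update L \<alpha> N A B F \<eta> \<ge> 0"
  unfolding harmonic_update_def using total_rate_nonneg[of L \<alpha> \<eta>]
  by (auto intro!: divide_nonneg_nonneg sum_nonneg mult_nonneg_nonneg zrp_g_nonneg assms)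

text \<open>Iterating the update from the indicator of \<open>A\<close> gives a pointwise increasing
  sequence bounded by \<open>1\<close>; its limit is a fixed point (the update is continuous
  because \<open>E_N\<close> is finite and the total rate is positive).\<close>
lemma harmonic_update_fixpoint:
  assumes N: "N \<ge> 1" and AE: "A \<subseteq> config_space L N" and AB: "A \<inter> B = {}"
  shows "\<exists>V. \<forall>\<eta>. harmonic_update L \<alpha> N A B V \<eta> = V \<eta>"
proof -
  let ?T = "harmonic_update L \<alpha> N A B"
  define W where "W n = (?T ^^ n) (\<lambda>\<eta>. if \<eta> \<in> A then 1 else 0)" for n
  have W_Suc: "W (Suc n) = ?T (W n)" for n by (simp add: W_def)
  have inc: "W n \<eta> \<le> W (Suc n) \<eta>" for n \<eta>
  proof (induction n arbitrary: \<eta>)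
    case 0
    have "0 \<le> ?T (W 0) \<eta>" by (rule harmonic_update_nonneg) (simp add: W_def)
    thus ?case using AE AB by (auto simp: W_def harmonic_update_def)
  qed (simp add: W_Suc harmonic_update_mono)
  have le_1: "W n \<eta> \<le> 1" for n \<eta>
    by (induction n arbitrary: \<eta>) (simp_all add: W_def harmonic_update_le_1)
  define V where "V \<eta> = (SUP n. W n \<eta>)" for \<eta>
  have lim: "(\<lambda>n. W n \<eta>) \<longlonglongrightarrow> V \<eta>" for \<eta>
    unfolding V_def by (rule LIMSEQ_incseq_SUP)
      (auto simp: bdd_above_def incseq_Suc_iff inc intro!: exI[of _ 1] le_1)
  have "?T V \<eta> = V \<eta>" for \<eta>
  proof -
    have "(\<lambda>n. ?T (W n) \<eta>) \<longlonglongrightarrow> ?T V \<eta>"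
    proof (cases "\<eta> \<in> config_space L N - (A \<union> B)")
      case True
      thus ?thesis unfolding harmonic_update_def using total_rate_pos[of \<eta> L N \<alpha>] N
        by (auto intro!: tendsto_divide tendsto_sum tendsto_mult tendsto_const lim)
    qed (auto simp: harmonic_update_def)
    moreover have "(\<lambda>n. ?T (W n) \<eta>) \<longlonglongrightarrow> V \<eta>"
      using LIMSEQ_Suc[OF lim] by (simp add: W_Suc)
    ultimately show ?thesis by (rule LIMSEQ_unique)
  qed
  thus ?thesis by blast
qed

lemma harmonic_update_fixpoint_is_eq_potential:
  assumes N: "N \<ge> 1" and AE: "A \<subseteq> config_space L N" and AB: "A \<inter> B = {}"
    and fix_V: "\<forall>\<eta>. harmonic_update L \<alpha> N A B V \<eta> = V \<eta>"
  shows "is_eq_potential L \<alpha> N A B V"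
  unfolding is_eq_potential_def
proof (intro conjI allI ballI impI)
  fix \<eta> assume h: "\<eta> \<in> config_space L N - (A \<union> B)"
  have pos: "total_rate L \<alpha> \<eta> > 0" using total_rate_pos[of \<eta> L N \<alpha>] h N by auto
  have "V \<eta> * total_rate L \<alpha> \<eta> = (\<Sum>x<L. zrp_g \<alpha> (\<eta> x) * V (sigma x (next_site L x) \<eta>))"
    using fix_V[rule_format, of \<eta>] h pos by (simp add: harmonic_update_def field_simps)
  thus "generator L \<alpha> V \<eta> = 0"
    unfolding generator_def total_rate_def
    by (simp add: right_diff_distrib sum_subtractf sum_distrib_left mult.commute)
next
  fix \<eta> show "\<eta> \<notin> config_space L N \<Longrightarrow> V \<eta> = 0"
    using fix_V[rule_format, of \<eta>] by (simp add: harmonic_update_def)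
next
  fix \<eta> show "\<eta> \<in> A \<Longrightarrow> V \<eta> = 1"
    using fix_V[rule_format, of \<eta>] AE by (auto simp: harmonic_update_def)
next
  fix \<eta> show "\<eta> \<in> B \<Longrightarrow> V \<eta> = 0"
    using fix_V[rule_format, of \<eta>] AB by (auto simp: harmonic_update_def split: if_splits)
qed

lemma eq_potential_spec:
  assumes L: "L \<ge> 1" and N: "N \<ge> 1" and AE: "A \<subseteq> config_space L N"
    and Ane: "A \<noteq> {}" and AB: "A \<inter> B = {}"
  shows "is_eq_potential L \<alpha> N A B (eq_potential L \<alpha> N A B)"
proof -
  obtain V where V: "is_eq_potential L \<alpha> N A B V"
    using harmonic_update_fixpoint[OF N AE AB] harmonic_update_fixpoint_is_eq_potential[OF N AE AB]
    by blast
  have "eq_potential L \<alpha> N A B = V"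
    unfolding eq_potential_def is_eq_potential_def[symmetric]
    by (rule the1_equality) (use V eq_potential_unique[OF L AE Ane] in blast)+
  thus ?thesis using V by simp
qed

section \<open>Edge representation and stationarity\<close>

text \<open>An edge \<open>(\<eta>, x)\<close> stands for the jump of a particle from \<open>x\<close> to \<open>x + 1\<close> in
  \<open>\<eta>\<close>; it carries the conductance \<open>\<mu>_N(\<eta>) g(\<eta>_x)\<close>.  Shifting an edge means
  letting the particle that just jumped perform the next jump.\<close>
definition edge_weight :: "nat \<Rightarrow> real \<Rightarrow> nat \<Rightarrow> (nat \<Rightarrow> nat) \<times> nat \<Rightarrow> real" where
  "edge_weight L \<alpha> N e = mu L \<alpha> N (fst e) * zrp_g \<alpha> (fst e (snd e))"

definition edge_shift :: "nat \<Rightarrow> (nat \<Rightarrow> nat) \<times> nat \<Rightarrow> (nat \<Rightarrow> nat) \<times> nat" where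
  "edge_shift L e = (sigma (snd e) (next_site L (snd e)) (fst e), next_site L (snd e))"

definition edge_grad :: "nat \<Rightarrow> ((nat \<Rightarrow> nat) \<Rightarrow> real) \<Rightarrow> (nat \<Rightarrow> nat) \<times> nat \<Rightarrow> real" where
  "edge_grad L G e = G (fst (edge_shift L e)) - G (fst e)"

definition active_edges :: "nat \<Rightarrow> nat \<Rightarrow> ((nat \<Rightarrow> nat) \<times> nat) set" where
  "active_edges L N = {e \<in> config_space L N \<times> {..<L}. fst e (snd e) \<ge> 1}"

lemma mu_nonneg: "mu L \<alpha> N \<eta> \<ge> 0"
  unfolding mu_def partition_fn_def weight_def using zrp_a_pos
  by (intro divide_nonneg_nonneg sum_nonneg prod_nonneg) (simp_all add: less_imp_le)

lemma edge_weight_nonneg: "edge_weight L \<alpha> N e \<ge> 0"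
  unfolding edge_weight_def using mu_nonneg zrp_g_nonneg by (intro mult_nonneg_nonneg)

lemma edge_weight_inactive: "fst e (snd e) = 0 \<Longrightarrow> edge_weight L \<alpha> N e = 0"
  by (simp add: edge_weight_def zrp_g_def)

lemma sum_sites_configs_as_edges:
  fixes f :: "(nat \<Rightarrow> nat) \<Rightarrow> nat \<Rightarrow> real"
  shows "(\<Sum>x<L. \<Sum>\<eta>\<in>E. f \<eta> x) = (\<Sum>e\<in>E \<times> {..<L}. f (fst e) (snd e))"
  by (subst sum.swap) (simp add: sum.cartesian_product case_prod_beta)

lemma dirichlet_edges:
  "dirichlet L \<alpha> N G = 1/2 * (\<Sum>e\<in>config_space L N \<times> {..<L}. edge_weight L \<alpha> N e * (edge_grad L G e)^2)"
  unfolding dirichlet_def sum_sites_configs_as_edges edge_weight_def edge_grad_def edge_shift_def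
  by simp

lemma dirichlet_nonneg: "dirichlet L \<alpha> N G \<ge> 0"
  unfolding dirichlet_edges by (intro mult_nonneg_nonneg sum_nonneg) (auto simp: edge_weight_nonneg)

lemma prod_split_two:
  fixes f :: "nat \<Rightarrow> real"
  assumes "finite S" "x \<in> S" "y \<in> S" "x \<noteq> y"
  shows "prod f S = f x * f y * prod f (S - {x, y})"
proof -
  have "prod f S = f x * prod f (S - {x})" using assms by (simp add: prod.remove)
  also have "prod f (S - {x}) = f y * prod f (S - {x} - {y})"
    using assms by (intro prod.remove) auto
  finally show ?thesis by (simp add: Diff_insert2[symmetric] insert_commute mult.assoc)
qed

text \<open>The product form of \<open>\<mu>_N\<close> together with \<open>g(n) = a(n)/a(n-1)\<close> gives the
  flux identity \<open>w(\<sigma>^{x,y}\<eta>) g((\<sigma>^{x,y}\<eta>)_y) = w(\<eta>) g(\<eta>_x)\<close>.\<close>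
lemma weight_jump:
  assumes L: "L \<ge> 2" and x: "x < L" and y: "y < L" and xy: "x \<noteq> y" and h: "\<eta> x \<ge> 1"
  shows "weight L \<alpha> (sigma x y \<eta>) * zrp_g \<alpha> (sigma x y \<eta> y) = weight L \<alpha> \<eta> * zrp_g \<alpha> (\<eta> x)"
proof -
  let ?\<xi> = "sigma x y \<eta>"
  let ?S = "{..<L} - {x, y}"
  let ?a = "zrp_a \<alpha>"
  have xi_x: "?\<xi> x = \<eta> x - 1" and xi_y: "?\<xi> y = \<eta> y + 1"
    using xy by (auto simp: sigma_def)
  have rest: "(\<Prod>z\<in>?S. 1 / ?a (?\<xi> z)) = (\<Prod>z\<in>?S. 1 / ?a (\<eta> z))"
    by (rule prod.cong) (auto simp: sigma_def)
  have w1: "weight L \<alpha> ?\<xi> = 1 / ?a (\<eta> x - 1) * (1 / ?a (\<eta> y + 1)) * (\<Prod>z\<in>?S. 1 / ?a (\<eta> z))"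
    unfolding weight_def using x y xy by (subst prod_split_two[of _ x y]) (auto simp: xi_x xi_y rest)
  have w2: "weight L \<alpha> \<eta> = 1 / ?a (\<eta> x) * (1 / ?a (\<eta> y)) * (\<Prod>z\<in>?S. 1 / ?a (\<eta> z))"
    unfolding weight_def using x y xy by (subst prod_split_two[of _ x y]) auto
  have g1: "zrp_g \<alpha> (?\<xi> y) = ?a (\<eta> y + 1) / ?a (\<eta> y)" by (simp add: xi_y zrp_g_def)
  have g2: "zrp_g \<alpha> (\<eta> x) = ?a (\<eta> x) / ?a (\<eta> x - 1)" using h by (simp add: zrp_g_def)
  show ?thesis unfolding w1 w2 g1 g2
    using zrp_a_pos[of \<alpha> "\<eta> x"] zrp_a_pos[of \<alpha> "\<eta> y"] zrp_a_pos[of \<alpha> "\<eta> x - 1"]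
      zrp_a_pos[of \<alpha> "\<eta> y + 1"]
    by (simp add: field_simps)
qed

lemma edge_weight_shift:
  assumes L: "L \<ge> 2" and e: "e \<in> active_edges L N"
  shows "edge_weight L \<alpha> N (edge_shift L e) = edge_weight L \<alpha> N e"
proof -
  obtain \<eta> x where ex: "e = (\<eta>, x)" "x < L" "\<eta> x \<ge> 1"
    using e by (cases e) (auto simp: active_edges_def)
  have "next_site L x < L" "x \<noteq> next_site L x"
    using next_site_less next_site_neq[OF L ex(2)] ex(2) by auto
  thus ?thesis using weight_jump[of L x "next_site L x" \<eta> \<alpha>, OF L ex(2) _ _ ex(3)] ex(1)
    unfolding edge_weight_def edge_shift_def mu_def by (simp add: divide_simps)
qed

definition prev_site :: "nat \<Rightarrow> nat \<Rightarrow> nat" where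
  "prev_site L y = (y + (L - 1)) mod L"

lemma prev_next_site: "x < L \<Longrightarrow> prev_site L (next_site L x) = x"
proof -
  assume x: "x < L"
  have "prev_site L (next_site L x) = (Suc x + (L - 1)) mod L"
    unfolding prev_site_def next_site_def by (simp add: mod_add_left_eq)
  also have "Suc x + (L - 1) = x + L" using x by simp
  finally show ?thesis using x by simp
qed

lemma next_prev_site: "y < L \<Longrightarrow> next_site L (prev_site L y) = y"
proof -
  assume y: "y < L"
  have "next_site L (prev_site L y) = (y + (L - 1) + 1) mod L"
    unfolding prev_site_def next_site_def by (simp add: mod_Suc_eq)
  also have "y + (L - 1) + 1 = y + L" using y by simp
  finally show ?thesis using y by simp
qed

lemma edge_shift_bij:
  assumes L: "L \<ge> 2"
  shows "bij_betw (edge_shift L) (active_edges L N) (active_edges L N)"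
proof (rule bij_betw_byWitness[where f' = "\<lambda>e. (sigma (snd e) (prev_site L (snd e)) (fst e), prev_site L (snd e))"])
  have Lp: "L > 0" using L by simp
  have prev_lt: "prev_site L y < L" for y using Lp by (simp add: prev_site_def)
  have act: "e \<in> active_edges L N \<longleftrightarrow> fst e \<in> config_space L N \<and> snd e < L \<and> fst e (snd e) \<ge> 1" for e
    by (cases e) (auto simp: active_edges_def)
  show "\<forall>e\<in>active_edges L N. (sigma (snd (edge_shift L e)) (prev_site L (snd (edge_shift L e)))
          (fst (edge_shift L e)), prev_site L (snd (edge_shift L e))) = e"
    using prev_next_site sigma_sigma sigma_same_site by (auto simp: act edge_shift_def)
  show "\<forall>e\<in>active_edges L N.
          edge_shift L (sigma (snd e) (prev_site L (snd e)) (fst e), prev_site L (snd e)) = e"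
    using next_prev_site sigma_sigma sigma_same_site by (auto simp: act edge_shift_def)
  show "edge_shift L ` active_edges L N \<subseteq> active_edges L N"
    using sigma_in_config_space sigma_target_occupied next_site_less[OF Lp]
    by (auto simp: act edge_shift_def)
  show "(\<lambda>e. (sigma (snd e) (prev_site L (snd e)) (fst e), prev_site L (snd e))) ` active_edges L N
          \<subseteq> active_edges L N"
    using sigma_in_config_space sigma_target_occupied prev_lt by (auto simp: act)
qed

text \<open>Stationarity of \<open>\<mu>_N\<close> in edge form: the conductance-weighted edge sum is
  invariant under the edge shift (inactive edges have zero conductance).\<close>
lemma edge_sum_shift_invariant:
  assumes L: "L \<ge> 2"
  shows "(\<Sum>e\<in>config_space L N \<times> {..<L}. edge_weight L \<alpha> N e * \<psi> (edge_shift L e))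
       = (\<Sum>e\<in>config_space L N \<times> {..<L}. edge_weight L \<alpha> N e * \<psi> e)"
proof -
  let ?X = "config_space L N \<times> {..<L}"
  let ?c = "edge_weight L \<alpha> N"
  have fin: "finite ?X" using finite_config_space by simp
  have sub: "active_edges L N \<subseteq> ?X" by (auto simp: active_edges_def)
  have off: "?c e * \<phi> e = 0" if "e \<in> ?X - active_edges L N" for e and \<phi> :: "_ \<Rightarrow> real"
    using that edge_weight_inactive[of e] by (auto simp: active_edges_def)
  have "(\<Sum>e\<in>?X. ?c e * \<psi> (edge_shift L e)) = (\<Sum>e\<in>active_edges L N. ?c e * \<psi> (edge_shift L e))"
    by (rule sum.mono_neutral_right[OF fin sub]) (intro ballI off)
  also have "\<dots> = (\<Sum>e\<in>active_edges L N. ?c (edge_shift L e) * \<psi> (edge_shift L e))"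
    using edge_weight_shift[OF L] by (intro sum.cong) auto
  also have "\<dots> = (\<Sum>e\<in>active_edges L N. ?c e * \<psi> e)"
    by (rule sum.reindex_bij_betw[OF edge_shift_bij[OF L]])
  also have "\<dots> = (\<Sum>e\<in>?X. ?c e * \<psi> e)"
    by (rule sum.mono_neutral_right[OF fin sub, symmetric]) (intro ballI off)
  finally show ?thesis .
qed

lemma edge_sum_shift_iter_invariant:
  assumes L: "L \<ge> 2"
  shows "(\<Sum>e\<in>config_space L N \<times> {..<L}. edge_weight L \<alpha> N e * \<psi> ((edge_shift L ^^ k) e))
       = (\<Sum>e\<in>config_space L N \<times> {..<L}. edge_weight L \<alpha> N e * \<psi> e)"
proof (induction k arbitrary: \<psi>)
  case (Suc k)
  have "(edge_shift L ^^ Suc k) e = (edge_shift L ^^ k) (edge_shift L e)" for e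
    by (simp add: funpow_swap1)
  thus ?case
    using edge_sum_shift_invariant[OF L, where \<psi> = "\<lambda>e. \<psi> ((edge_shift L ^^ k) e)"] Suc.IH
    by simp
qed simp

lemma edge_sum_orbit_average:
  assumes L: "L \<ge> 2"
  shows "real L * (\<Sum>e\<in>config_space L N \<times> {..<L}. edge_weight L \<alpha> N e * \<psi> e)
       = (\<Sum>e\<in>config_space L N \<times> {..<L}. edge_weight L \<alpha> N e * (\<Sum>k<L. \<psi> ((edge_shift L ^^ k) e)))"
proof -
  have "real L * (\<Sum>e\<in>config_space L N \<times> {..<L}. edge_weight L \<alpha> N e * \<psi> e)
      = (\<Sum>k<L. \<Sum>e\<in>config_space L N \<times> {..<L}. edge_weight L \<alpha> N e * \<psi> ((edge_shift L ^^ k) e))"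
    by (simp add: edge_sum_shift_iter_invariant[OF L])
  also have "\<dots> = (\<Sum>e\<in>config_space L N \<times> {..<L}. edge_weight L \<alpha> N e * (\<Sum>k<L. \<psi> ((edge_shift L ^^ k) e)))"
    by (subst sum.swap) (simp add: sum_distrib_left)
  finally show ?thesis .
qed

lemma edge_shift_iter:
  assumes "x < L" "\<eta> x \<ge> 1"
  shows "(edge_shift L ^^ k) (\<eta>, x) = (sigma x ((x + k) mod L) \<eta>, (x + k) mod L)"
proof (induction k)
  case 0 thus ?case using assms sigma_same_site[of \<eta> x] by simp
next
  case (Suc k)
  thus ?case using sigma_sigma[of \<eta> x, OF assms(2)] by (simp add: edge_shift_def next_site_mod)
qed

lemma edge_orbit_closes:
  assumes "x < L" "\<eta> x \<ge> 1"
  shows "fst ((edge_shift L ^^ L) (\<eta>, x)) = \<eta>"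
  using edge_shift_iter[of x L \<eta> L, OF assms] assms sigma_same_site[of \<eta> x] by simp

section \<open>The sector inequality\<close>

definition gen_form :: "nat \<Rightarrow> real \<Rightarrow> nat \<Rightarrow> ((nat \<Rightarrow> nat) \<Rightarrow> real) \<Rightarrow> ((nat \<Rightarrow> nat) \<Rightarrow> real) \<Rightarrow> real"
  where "gen_form L \<alpha> N G F = (\<Sum>\<eta>\<in>config_space L N. mu L \<alpha> N \<eta> * generator L \<alpha> G \<eta> * F \<eta>)"

lemma gen_form_edges:
  "gen_form L \<alpha> N G F
     = (\<Sum>e\<in>config_space L N \<times> {..<L}. edge_weight L \<alpha> N e * edge_grad L G e * F (fst e))"
proof -
  have "gen_form L \<alpha> N G F = (\<Sum>x<L. \<Sum>\<eta>\<in>config_space L N.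
          mu L \<alpha> N \<eta> * zrp_g \<alpha> (\<eta> x) * (G (sigma x (next_site L x) \<eta>) - G \<eta>) * F \<eta>)"
    unfolding gen_form_def generator_def
    by (subst sum.swap) (simp add: sum_distrib_left sum_distrib_right mult.assoc)
  thus ?thesis
    unfolding sum_sites_configs_as_edges by (simp add: edge_weight_def edge_grad_def edge_shift_def)
qed

text \<open>\<open>D_N(G) = -\<langle>\<L>G, G\<rangle>_{\<mu>_N}\<close>: expand the square and use stationarity.\<close>
lemma dirichlet_eq_neg_gen_form:
  assumes L: "L \<ge> 2"
  shows "dirichlet L \<alpha> N G = - gen_form L \<alpha> N G G"
proof -
  let ?X = "config_space L N \<times> {..<L}"
  let ?c = "edge_weight L \<alpha> N"
  have "(\<Sum>e\<in>?X. ?c e * (edge_grad L G e)^2)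
      = (\<Sum>e\<in>?X. ?c e * (G (fst (edge_shift L e)))^2 - ?c e * (G (fst e))^2
           - 2 * (?c e * edge_grad L G e * G (fst e)))"
    by (rule sum.cong) (simp_all add: edge_grad_def power2_eq_square algebra_simps)
  also have "\<dots> = (\<Sum>e\<in>?X. ?c e * (G (fst (edge_shift L e)))^2) - (\<Sum>e\<in>?X. ?c e * (G (fst e))^2)
        - 2 * (\<Sum>e\<in>?X. ?c e * edge_grad L G e * G (fst e))"
    by (simp add: sum_subtractf sum_distrib_left)
  also have "\<dots> = - 2 * gen_form L \<alpha> N G G"
    using edge_sum_shift_invariant[OF L, where \<psi> = "\<lambda>e. (G (fst e))^2"]
    by (simp add: gen_form_edges)
  finally show ?thesis unfolding dirichlet_edges by simp
qed

text \<open>Testing \<open>\<L>V\<close> against any function with the boundary values of \<open>V\<close> gives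
  the same result, because \<open>\<L>V\<close> vanishes off \<open>A \<union> B\<close>.\<close>
lemma gen_form_eq_potential:
  assumes V: "is_eq_potential L \<alpha> N A B V"
    and FA: "\<forall>\<eta>\<in>A. F \<eta> = 1" and FB: "\<forall>\<eta>\<in>B. F \<eta> = 0"
  shows "gen_form L \<alpha> N V F = gen_form L \<alpha> N V V"
  unfolding gen_form_def
proof (rule sum.cong)
  fix \<eta> assume "\<eta> \<in> config_space L N"
  thus "mu L \<alpha> N \<eta> * generator L \<alpha> V \<eta> * F \<eta> = mu L \<alpha> N \<eta> * generator L \<alpha> V \<eta> * V \<eta>"
    using V FA FB by (cases "\<eta> \<in> A \<union> B") (auto simp: is_eq_potential_def)
qed simp

text \<open>Sector bound on a cycle of length \<open>L\<close>: if \<open>g\<close> returns to its starting value,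
  the increments of \<open>g\<close> sum to zero, so \<open>h\<close> may be replaced by \<open>h - h(0)\<close>, which is
  controlled by the total variation of \<open>h\<close>; then AM--GM and Cauchy--Schwarz.\<close>
lemma cycle_sector_bound:
  fixes g h :: "nat \<Rightarrow> real"
  assumes L: "L > 0" and closed: "g L = g 0"
  shows "\<bar>\<Sum>k<L. (g (Suc k) - g k) * h k\<bar>
           \<le> (\<Sum>k<L. (g (Suc k) - g k)^2) / 4 + (real L)^2 * (\<Sum>k<L. (h (Suc k) - h k)^2)"
proof -
  define a where "a k = g (Suc k) - g k" for k
  define b where "b k = h (Suc k) - h k" for k
  define SA where "SA = (\<Sum>k<L. \<bar>a k\<bar>)"
  define SB where "SB = (\<Sum>k<L. \<bar>b k\<bar>)"
  have "(\<Sum>k<L. a k) = 0" unfolding a_def using closed by (simp add: sum_lessThan_telescope)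
  hence recentre: "(\<Sum>k<L. a k * h k) = (\<Sum>k<L. a k * (h k - h 0))"
    by (simp add: right_diff_distrib sum_subtractf sum_distrib_right[symmetric])
  have h_var: "\<bar>h k - h 0\<bar> \<le> SB" if "k < L" for k
  proof -
    have "\<bar>h k - h 0\<bar> = \<bar>\<Sum>j<k. b j\<bar>" by (simp add: b_def sum_lessThan_telescope)
    also have "\<dots> \<le> (\<Sum>j<k. \<bar>b j\<bar>)" by (rule sum_abs)
    also have "\<dots> \<le> SB" unfolding SB_def using that by (intro sum_mono2) auto
    finally show ?thesis .
  qed
  have "\<bar>\<Sum>k<L. a k * h k\<bar> = \<bar>\<Sum>k<L. a k * (h k - h 0)\<bar>"
    by (simp only: recentre)
  also have "\<dots> \<le> SA * SB"
    unfolding SA_def sum_distrib_right using h_var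
    by (intro order_trans[OF sum_abs] sum_mono) (auto simp: abs_mult intro: mult_left_mono)
  also have "\<dots> \<le> SA^2 / (4 * real L) + real L * SB^2"
  proof -
    have "0 \<le> (SA - 2 * real L * SB)^2" by simp
    thus ?thesis using L by (simp add: field_simps power2_eq_square)
  qed
  also have "\<dots> \<le> (\<Sum>k<L. (a k)^2) * real L / (4 * real L) + real L * ((\<Sum>k<L. (b k)^2) * real L)"
    using sum_squared_le_sum_of_squares[of "\<lambda>k. \<bar>a k\<bar>" "{..<L}"]
      sum_squared_le_sum_of_squares[of "\<lambda>k. \<bar>b k\<bar>" "{..<L}"] L
    by (intro add_mono divide_right_mono mult_left_mono) (simp_all add: SA_def SB_def)
  also have "\<dots> = (\<Sum>k<L. (a k)^2) / 4 + (real L)^2 * (\<Sum>k<L. (b k)^2)"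
    using L by (simp add: power2_eq_square)
  finally show ?thesis by (simp add: a_def b_def)
qed

text \<open>Sector inequality \<open>|\<langle>\<L>G, F\<rangle>| \<le> D(G)/2 + 2 L^2 D(F)\<close>: average the edge sum
  of \<open>\<langle>\<L>G, F\<rangle>\<close> along orbits of the edge shift and apply the cycle bound on
  each orbit, which closes after \<open>L\<close> steps.\<close>
lemma sector_bound:
  assumes L: "L \<ge> 2"
  shows "\<bar>gen_form L \<alpha> N G F\<bar> \<le> dirichlet L \<alpha> N G / 2 + 2 * (real L)^2 * dirichlet L \<alpha> N F"
proof -
  let ?X = "config_space L N \<times> {..<L}"
  let ?c = "edge_weight L \<alpha> N"
  define v where "v e k = fst ((edge_shift L ^^ k) e)" for e k
  have Lp: "L > 0" using L by simp
  have grad_orbit: "edge_grad L H ((edge_shift L ^^ k) e) = H (v e (Suc k)) - H (v e k)" for H e k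
    by (simp add: edge_grad_def v_def)
  have orbit_sq: "real L * (2 * dirichlet L \<alpha> N H)
      = (\<Sum>e\<in>?X. ?c e * (\<Sum>k<L. (H (v e (Suc k)) - H (v e k))^2))" for H
    using edge_sum_orbit_average[OF L, where \<psi> = "\<lambda>e. (edge_grad L H e)^2"]
    by (simp add: dirichlet_edges grad_orbit)
  have per_edge: "?c e * \<bar>\<Sum>k<L. (G (v e (Suc k)) - G (v e k)) * F (v e k)\<bar>
      \<le> ?c e * ((\<Sum>k<L. (G (v e (Suc k)) - G (v e k))^2) / 4
                 + (real L)^2 * (\<Sum>k<L. (F (v e (Suc k)) - F (v e k))^2))" if e: "e \<in> ?X" for e
  proof (cases "?c e = 0")
    case False
    obtain \<eta> x where ex: "e = (\<eta>, x)" "x < L" using e by (cases e) auto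
    hence "\<eta> x \<ge> 1" using False edge_weight_inactive[of e] by fastforce
    hence closed: "v e L = v e 0" using edge_orbit_closes[OF ex(2)] ex(1) by (simp add: v_def)
    show ?thesis
      by (intro mult_left_mono cycle_sector_bound[OF Lp, where g = "\<lambda>k. G (v e k)"] edge_weight_nonneg)
        (simp add: closed)
  qed simp
  have "real L * gen_form L \<alpha> N G F
      = (\<Sum>e\<in>?X. ?c e * (\<Sum>k<L. (G (v e (Suc k)) - G (v e k)) * F (v e k)))"
    using edge_sum_orbit_average[OF L, where \<psi> = "\<lambda>e. edge_grad L G e * F (fst e)"]
    by (simp add: gen_form_edges grad_orbit v_def mult.assoc)
  hence "real L * \<bar>gen_form L \<alpha> N G F\<bar>
      = \<bar>\<Sum>e\<in>?X. ?c e * (\<Sum>k<L. (G (v e (Suc k)) - G (v e k)) * F (v e k))\<bar>"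
    by (metis abs_mult abs_of_nat)
  also have "\<dots> \<le> (\<Sum>e\<in>?X. ?c e * \<bar>\<Sum>k<L. (G (v e (Suc k)) - G (v e k)) * F (v e k)\<bar>)"
    by (rule order_trans[OF sum_abs]) (simp add: abs_mult edge_weight_nonneg)
  also have "\<dots> \<le> (\<Sum>e\<in>?X. ?c e * ((\<Sum>k<L. (G (v e (Suc k)) - G (v e k))^2) / 4
                 + (real L)^2 * (\<Sum>k<L. (F (v e (Suc k)) - F (v e k))^2)))"
    by (rule sum_mono) (rule per_edge)
  also have "\<dots> = real L * (2 * dirichlet L \<alpha> N G) / 4 + (real L)^2 * (real L * (2 * dirichlet L \<alpha> N F))"
    unfolding orbit_sq
    by (simp add: distrib_left sum.distrib sum_divide_distrib mult.left_commute sum_distrib_left)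
  also have "\<dots> = real L * (dirichlet L \<alpha> N G / 2 + 2 * (real L)^2 * dirichlet L \<alpha> N F)"
    by (simp add: algebra_simps)
  finally show ?thesis using Lp by simp
qed

lemma eq_potential_dirichlet_bound:
  assumes L: "L \<ge> 2" and V: "is_eq_potential L \<alpha> N A B V"
    and FA: "\<forall>\<eta>\<in>A. F \<eta> = 1" and FB: "\<forall>\<eta>\<in>B. F \<eta> = 0"
  shows "dirichlet L \<alpha> N V \<le> 4 * real L ^ 2 * dirichlet L \<alpha> N F"
proof -
  have "dirichlet L \<alpha> N V = - gen_form L \<alpha> N V F"
    using dirichlet_eq_neg_gen_form[OF L] gen_form_eq_potential[OF V FA FB] by simp
  also have "\<dots> \<le> dirichlet L \<alpha> N V / 2 + 2 * (real L)^2 * dirichlet L \<alpha> N F"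
    using sector_bound[OF L, of \<alpha> N V F] by linarith
  finally show ?thesis by simp
qed

theorem lemma3p2:
  fixes L N :: nat and \<alpha> :: real and A B :: "(nat \<Rightarrow> nat) set"
  assumes "L \<ge> 2" and "\<alpha> > 0" and "N \<ge> 1"
    and "A \<subseteq> config_space L N" and "B \<subseteq> config_space L N"
    and "A \<noteq> {}" and "B \<noteq> {}" and "A \<inter> B = {}"
  shows "sym_capacity L \<alpha> N A B \<le> capacity L \<alpha> N A B \<and>
         capacity L \<alpha> N A B \<le> 4 * real L ^ 2 * sym_capacity L \<alpha> N A B"
proof -
  let ?V = "eq_potential L \<alpha> N A B"
  let ?S = "{dirichlet L \<alpha> N F | F. (\<forall>\<eta>\<in>A. F \<eta> = 1) \<and> (\<forall>\<eta>\<in>B. F \<eta> = 0)}"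
  have V: "is_eq_potential L \<alpha> N A B ?V"
    using eq_potential_spec assms(1,3,4,6,8) by simp
  have V_adm: "dirichlet L \<alpha> N ?V \<in> ?S" using V unfolding is_eq_potential_def by blast
  have bdd: "bdd_below ?S" unfolding bdd_below_def using dirichlet_nonneg by blast
  have Lpos: "4 * real L ^ 2 > 0" using assms(1) by simp
  have "dirichlet L \<alpha> N ?V / (4 * real L ^ 2) \<le> Inf ?S"
    using V_adm eq_potential_dirichlet_bound[OF assms(1) V] Lpos
    by (intro cInf_greatest) (auto simp: divide_le_eq mult.commute)
  thus ?thesis
    using cInf_lower[OF V_adm bdd] Lpos
    by (simp add: capacity_def sym_capacity_def divide_le_eq mult.commute)
qed

end
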